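(* Let $\mathcal{C}$ be the set of all coupon sets, $C_0=\{c_0\}$ the default coupon set, $f$ the coupon-set transition and $r$ the redemption value, all as in the context. Fix a trip-demand probability $\lambda\in[0,1]$, a discount factor $\gamma\in[0,1)$, a random trip-detail variable $X$ with distribution $P$, real-valued measurable functions $u(X)$ (utility gain from taking the target service) and $\tilde u(X)$ (expected utility of the alternative modes), a mode-selection policy $\pi_x(X,C)\in[0,1]$, a conditional distribution of the realized fare $p'\ge 0$ given $X$, and a coupon-selection policy $\pi_c(\cdot\mid p',C)$ (a probability distribution on $C$ for every $p'\ge0$, $C\in\mathcal C$). Suppose that real-valued functions $U$ on $\mathcal C$, $U_x(X,C)$ and $U_c(p',C)$ (with all expectations below finite) satisfy, for all $C\in\mathcal C$, all $X$ and all $p'\ge 0$, $$U(C)=(1-\lambda)\gamma\,U(f(C))+\lambda\,\mathbb{E}_X\big[U_x(X,C)\big],$$ $$U_x(X,C)=\big(1-\pi_x(X,C)\big)\gamma\,U(f(C))+\pi_x(X,C)\Big[u(X)+\mathbb{E}_{p'\mid X}\big[U_c(p',C)\big]\Big]+\tilde u(X),$$ $$U_c(p',C)=\sum_{c\in C}\pi_c(c\mid p',C)\big[r(p',c)+\gamma\,U(f(C,c))\big].$$ Then $$U(C_0)=\frac{1}{1-\gamma}\,\lambda\,\mathbb{E}_X\big[\tilde u(X)+\pi_x(X,C_0)\,u(X)\big].$$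
   Context: A coupon group is a triple $c=\langle v,T,n\rangle\in\mathbb{R}\times\mathbb{N}\times\mathbb{N}^+$ (face value $v$, remaining time to expiration $T$, number of coupons $n$). The default (zero-valued) group is $c_0=\langle 0,0,1\rangle$. A coupon set is a finite set of coupon groups containing $c_0$ in which no two groups have the same pair $(v,T)$; $\mathcal C$ is the set of all coupon sets and $C_0=\{c_0\}$. For a group, $f_c(\langle v,T,n\rangle)=\langle v,T-1,n\rangle$ if $v>0$, $n>0$ and $T\ge 1$, and $f_c(\langle v,T,n\rangle)=c_0$ otherwise. For $C\in\mathcal C$ and $c=\langle v,T,n\rangle\in C$, the transition after redeeming one coupon of group $c$ is $f(C,c)=\{f_c(c'):c'\in C\setminus\{c\}\}\cup\{f_c(\langle v,T,n-1\rangle)\}$, and $f(C):=f(C,c_0)$ (no redemption). In particular $f(C_0)=f(C_0,c_0)=C_0$. The redemption value of a group at realized fare $p'\ge0$ is $r(p',\langle v,T,n\rangle)=\min(v,p')$; so $r(p',c_0)=0$. $\mathbb{E}_X$ denotes expectation over $X\sim P$ and $\mathbb{E}_{p'\mid X}$ expectation over the realized fare given $X$. *)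

theory Defs
  imports "HOL-Probability.Probability"
begin

text \<open>A coupon group is a triple (v, T, n): face value, remaining time, number of coupons.\<close>
type_synonym coupon = "real \<times> nat \<times> nat"

definition c0 :: coupon where
  "c0 = (0, 0, 1)"

definition coupon_sets :: "coupon set set" where
  "coupon_sets = {C. finite C \<and> c0 \<in> C \<and> (\<forall>(v, T, n) \<in> C. n \<ge> 1) \<and>
     (\<forall>c \<in> C. \<forall>c' \<in> C. fst c = fst c' \<and> fst (snd c) = fst (snd c') \<longrightarrow> c = c')}"

definition C0 :: "coupon set" where
  "C0 = {c0}"

fun fc :: "coupon \<Rightarrow> coupon" where
  "fc (v, T, n) = (if v > 0 \<and> n > 0 \<and> T \<ge> 1 then (v, T - 1, n) else c0)"

fun f_red :: "coupon set \<Rightarrow> coupon \<Rightarrow> coupon set" where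
  "f_red C (v, T, n) = fc ` (C - {(v, T, n)}) \<union> {fc (v, T, n - 1)}"

text \<open>Transition without redemption.\<close>
definition f_trans :: "coupon set \<Rightarrow> coupon set" where
  "f_trans C = f_red C c0"

fun r :: "real \<Rightarrow> coupon \<Rightarrow> real" where
  "r p (v, T, n) = min v p"

end

theory Submission
  imports Defs
begin

(* The default coupon set C0 is absorbing (f(C0, c0) = C0) and its only group redeems for 0.
   Hence at C0 the coupon stage is worth gamma U(C0), the mode stage is worth
   gamma U(C0) + ut(X) + pi_x(X, C0) u(X), and the Bellman equation for U becomes the linear
   equation U(C0) = (1 - lambda) gamma U(C0) + lambda (gamma U(C0) + I) with
   I = E[ut(X) + pi_x(X, C0) u(X)], i.e. (1 - gamma) U(C0) = lambda I. *)

lemma C0_in_coupon_sets: "C0 \<in> coupon_sets"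
  unfolding coupon_sets_def C0_def c0_def by auto

lemma f_red_C0_c0 [simp]: "f_red C0 c0 = C0"
  by (simp add: C0_def c0_def)

lemma f_trans_C0 [simp]: "f_trans C0 = C0"
  unfolding f_trans_def by simp

lemma sum_C0 [simp]: "(\<Sum>c\<in>C0. g c) = g c0"
  unfolding C0_def by simp

lemma r_c0 [simp]: "0 \<le> p \<Longrightarrow> r p c0 = 0"
  unfolding c0_def by simp

lemma (in prob_space) integral_AE_eq_const:
  fixes g :: "'a \<Rightarrow> real"
  assumes "integrable M g" and "AE x in M. g x = c"
  shows "(\<integral>x. g x \<partial>M) = c"
proof -
  have "(\<integral>x. g x \<partial>M) = (\<integral>x. c \<partial>M)"
    using assms by (intro integral_cong_AE) auto
  then show ?thesis
    by (simp add: prob_space)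
qed

lemma absorbing_value_eq:
  fixes lam \<gamma> U I :: real
  assumes "\<gamma> < 1" and "U = (1 - lam) * \<gamma> * U + lam * (\<gamma> * U + I)"
  shows "U = 1 / (1 - \<gamma>) * lam * I"
proof -
  from assms(2) have "(1 - \<gamma>) * U = lam * I"
    by (simp add: algebra_simps)
  with assms(1) show ?thesis
    by (simp add: field_simps)
qed

theorem corollary1:
  fixes lam \<gamma> :: real
    and P :: "'x measure"
    and u ut :: "'x \<Rightarrow> real"
    and \<pi>x :: "'x \<Rightarrow> coupon set \<Rightarrow> real"
    and K :: "'x \<Rightarrow> real measure"
    and \<pi>c :: "real \<Rightarrow> coupon set \<Rightarrow> coupon \<Rightarrow> real"
    and U :: "coupon set \<Rightarrow> real"
    and Ux :: "'x \<Rightarrow> coupon set \<Rightarrow> real"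
    and Uc :: "real \<Rightarrow> coupon set \<Rightarrow> real"
  assumes lam: "0 \<le> lam" "lam \<le> 1"
    and gam: "0 \<le> \<gamma>" "\<gamma> < 1"
    and P: "prob_space P"
    and u_meas: "u \<in> borel_measurable P"
    and ut_meas: "ut \<in> borel_measurable P"
    and \<pi>x_meas: "\<And>C. C \<in> coupon_sets \<Longrightarrow> (\<lambda>x. \<pi>x x C) \<in> borel_measurable P"
    and \<pi>x_range: "\<And>x C. x \<in> space P \<Longrightarrow> C \<in> coupon_sets \<Longrightarrow> 0 \<le> \<pi>x x C \<and> \<pi>x x C \<le> 1"
    and K_prob: "\<And>x. x \<in> space P \<Longrightarrow> prob_space (K x)"
    and K_nonneg: "\<And>x. x \<in> space P \<Longrightarrow> (AE p in K x. p \<ge> 0)"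
    and \<pi>c_nonneg: "\<And>p C c. p \<ge> 0 \<Longrightarrow> C \<in> coupon_sets \<Longrightarrow> c \<in> C \<Longrightarrow> \<pi>c p C c \<ge> 0"
    and \<pi>c_sum: "\<And>p C. p \<ge> 0 \<Longrightarrow> C \<in> coupon_sets \<Longrightarrow> (\<Sum>c\<in>C. \<pi>c p C c) = 1"
    and Ux_int: "\<And>C. C \<in> coupon_sets \<Longrightarrow> integrable P (\<lambda>x. Ux x C)"
    and Uc_int: "\<And>x C. x \<in> space P \<Longrightarrow> C \<in> coupon_sets \<Longrightarrow> integrable (K x) (\<lambda>p. Uc p C)"
    and eqU: "\<And>C. C \<in> coupon_sets \<Longrightarrow>
       U C = (1 - lam) * \<gamma> * U (f_trans C) + lam * (\<integral>x. Ux x C \<partial>P)"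
    and eqUx: "\<And>x C. x \<in> space P \<Longrightarrow> C \<in> coupon_sets \<Longrightarrow>
       Ux x C = (1 - \<pi>x x C) * \<gamma> * U (f_trans C)
                + \<pi>x x C * (u x + (\<integral>p. Uc p C \<partial>K x)) + ut x"
    and eqUc: "\<And>p C. p \<ge> 0 \<Longrightarrow> C \<in> coupon_sets \<Longrightarrow>
       Uc p C = (\<Sum>c\<in>C. \<pi>c p C c * (r p c + \<gamma> * U (f_red C c)))"
  shows "U C0 = 1 / (1 - \<gamma>) * lam * (\<integral>x. ut x + \<pi>x x C0 * u x \<partial>P)"
proof -
  interpret P: prob_space P by (rule P)
  define I where "I = (\<integral>x. ut x + \<pi>x x C0 * u x \<partial>P)"
  have Uc_C0: "Uc p C0 = \<gamma> * U C0" if "p \<ge> 0" for p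
    using eqUc[OF that C0_in_coupon_sets] \<pi>c_sum[OF that C0_in_coupon_sets] that
    by simp
  have Ux_C0: "Ux x C0 = \<gamma> * U C0 + (ut x + \<pi>x x C0 * u x)" if x: "x \<in> space P" for x
  proof -
    interpret K: prob_space "K x" using K_prob[OF x] .
    have "(\<integral>p. Uc p C0 \<partial>K x) = \<gamma> * U C0"
      using Uc_int[OF x C0_in_coupon_sets] K_nonneg[OF x]
      by (intro K.integral_AE_eq_const) (auto elim!: eventually_mono simp: Uc_C0)
    then show ?thesis
      using eqUx[OF x C0_in_coupon_sets] by (simp add: algebra_simps)
  qed
  have "integrable P (\<lambda>x. Ux x C0 - \<gamma> * U C0)"
    using Ux_int[OF C0_in_coupon_sets] by simp
  then have gain_integrable: "integrable P (\<lambda>x. ut x + \<pi>x x C0 * u x)"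
    by (rule Bochner_Integration.integrable_cong[THEN iffD1, OF refl, rotated]) (simp add: Ux_C0)
  have Ux_integral: "(\<integral>x. Ux x C0 \<partial>P) = \<gamma> * U C0 + I"
  proof -
    have "(\<integral>x. Ux x C0 \<partial>P) = (\<integral>x. \<gamma> * U C0 + (ut x + \<pi>x x C0 * u x) \<partial>P)"
      by (rule Bochner_Integration.integral_cong) (simp_all add: Ux_C0)
    with gain_integrable show ?thesis
      by (simp add: I_def P.prob_space)
  qed
  have "U C0 = (1 - lam) * \<gamma> * U (f_trans C0) + lam * (\<integral>x. Ux x C0 \<partial>P)"
    by (rule eqU[OF C0_in_coupon_sets])
  also have "\<dots> = (1 - lam) * \<gamma> * U C0 + lam * (\<gamma> * U C0 + I)"
    by (simp add: Ux_integral)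
  finally have "U C0 = (1 - lam) * \<gamma> * U C0 + lam * (\<gamma> * U C0 + I)" .
  with gam(2) show ?thesis
    unfolding I_def by (rule absorbing_value_eq)
qed

end
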